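(* Let $H$ be the disjoint union (with no edges between them) of cliques $KH_1,KH_2,\ldots,KH_s$ of sizes $y_1\ge y_2\ge\cdots\ge y_s\ge 1$. Then $$\rho(H)=\sum_{i=1}^s i\,y_i.$$
   Context: All graphs are finite and simple. A coloring means a proper vertex coloring; an induced subgraph is rainbow if all its vertices have pairwise different colors. For a graph $H$, $\rho(H)$ is the least number $m$ such that there exists a graph $G$ on $m$ vertices such that every proper vertex coloring of $G$ contains a rainbow induced subgraph isomorphic to $H$. *)

theory Defs
  imports Main
begin

definition simple_graph :: "'a set \<Rightarrow> ('a \<Rightarrow> 'a \<Rightarrow> bool) \<Rightarrow> bool" where
  "simple_graph V E \<longleftrightarrow> finite V \<and>
     (\<forall>x y. E x y \<longrightarrow> x \<in> V \<and> y \<in> V \<and> x \<noteq> y \<and> E y x)"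

definition proper_coloring :: "'a set \<Rightarrow> ('a \<Rightarrow> 'a \<Rightarrow> bool) \<Rightarrow> ('a \<Rightarrow> nat) \<Rightarrow> bool" where
  "proper_coloring V E c \<longleftrightarrow> (\<forall>x\<in>V. \<forall>y\<in>V. E x y \<longrightarrow> c x \<noteq> c y)"

definition has_rainbow_induced_copy ::
  "'b set \<Rightarrow> ('b \<Rightarrow> 'b \<Rightarrow> bool) \<Rightarrow> 'a set \<Rightarrow> ('a \<Rightarrow> 'a \<Rightarrow> bool) \<Rightarrow> ('a \<Rightarrow> nat) \<Rightarrow> bool" where
  "has_rainbow_induced_copy VH EH VG EG c \<longleftrightarrow>
     (\<exists>f. inj_on f VH \<and> f ` VH \<subseteq> VG \<and>
          (\<forall>u\<in>VH. \<forall>v\<in>VH. EH u v \<longleftrightarrow> EG (f u) (f v)) \<and>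
          inj_on (c \<circ> f) VH)"

text \<open>Some graph on m vertices (WLOG vertex set {0..<m}) all of whose proper colourings
  contain a rainbow induced copy of H.\<close>
definition rho_witness_size :: "'b set \<Rightarrow> ('b \<Rightarrow> 'b \<Rightarrow> bool) \<Rightarrow> nat \<Rightarrow> bool" where
  "rho_witness_size VH EH m \<longleftrightarrow>
     (\<exists>EG :: nat \<Rightarrow> nat \<Rightarrow> bool. simple_graph {0..<m} EG \<and>
        (\<forall>c. proper_coloring {0..<m} EG c \<longrightarrow> has_rainbow_induced_copy VH EH {0..<m} EG c))"

definition rho :: "'b set \<Rightarrow> ('b \<Rightarrow> 'b \<Rightarrow> bool) \<Rightarrow> nat" where
  "rho VH EH = (LEAST m. rho_witness_size VH EH m)"

text \<open>Disjoint union of cliques of sizes y 0, ..., y (s-1): vertex (i,j) is the j-th vertex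
  of the i-th clique.\<close>
definition cliques_V :: "nat \<Rightarrow> (nat \<Rightarrow> nat) \<Rightarrow> (nat \<times> nat) set" where
  "cliques_V s y = {(i, j). i < s \<and> j < y i}"

definition cliques_E :: "nat \<Rightarrow> (nat \<Rightarrow> nat) \<Rightarrow> (nat \<times> nat) \<Rightarrow> (nat \<times> nat) \<Rightarrow> bool" where
  "cliques_E s y u v \<longleftrightarrow> u \<in> cliques_V s y \<and> v \<in> cliques_V s y \<and> fst u = fst v \<and> u \<noteq> v"

end

theory Submission
  imports Defs
begin

text \<open>Let Y(k) = y(k) + ... + y(s-1), so that Y(0) + ... + Y(s-1) = \<Sum>i (i+1) y(i).

  Upper bound: take for G the disjoint union of cliques of sizes Y(0), ..., Y(s-1).
  A proper colouring makes each of these cliques rainbow, so a rainbow copy of H can be chosen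
  greedily from the last clique to the first: clique k carries Y(k) colours, of which at most
  Y(k+1) are already used, leaving room for the y(k) vertices of the k-th clique of H.

  Lower bound: colour G by repeatedly removing a maximum independent set; then colour class j
  is at least as large as every independent set using only colours \<ge> j. In a rainbow copy of
  H, one vertex of colour \<ge> j from each clique that has one forms such an independent set,
  while the other cliques use only colours < j and so have at most j vertices in total. As y
  is nonincreasing, class j therefore has at least #{k. j < Y(k)} vertices, and summing over
  j gives |G| \<ge> Y(0) + ... + Y(s-1).\<close>

lemma sum_tail_sums: "(\<Sum>k<s. \<Sum>i\<in>{k..<s}. y i) = (\<Sum>i<s. (i + 1) * (y i :: nat))"
proof (induction s)
  case 0
  then show ?case by simp
next
  case (Suc s)
  have "(\<Sum>k<Suc s. \<Sum>i\<in>{k..<Suc s}. y i) = (\<Sum>k<Suc s. (\<Sum>i\<in>{k..<s}. y i) + y s)"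
    by (intro sum.cong) auto
  also have "\<dots> = (\<Sum>k<s. \<Sum>i\<in>{k..<s}. y i) + Suc s * y s"
    by (simp add: sum.distrib)
  finally show ?case using Suc by simp
qed

lemma sum_eq_sum_card_levels:
  fixes Y :: "nat \<Rightarrow> nat"
  assumes "\<And>k. k < s \<Longrightarrow> Y k \<le> M"
  shows "(\<Sum>k<s. Y k) = (\<Sum>j<M. card {k\<in>{..<s}. j < Y k})"
proof -
  have "(\<Sum>k<s. Y k) = (\<Sum>k<s. card {j\<in>{..<M}. j < Y k})"
  proof (intro sum.cong refl)
    fix k assume "k \<in> {..<s}"
    then have "{j\<in>{..<M}. j < Y k} = {..<Y k}" using assms by fastforce
    then show "Y k = card {j\<in>{..<M}. j < Y k}" by simp
  qed
  also have "\<dots> = (\<Sum>k<s. \<Sum>j<M. if j < Y k then 1 else 0)"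
    by (intro sum.cong refl) (simp add: sum.inter_filter[symmetric])
  also have "\<dots> = (\<Sum>j<M. \<Sum>k<s. if j < Y k then 1 else 0)"
    by (rule sum.swap)
  also have "\<dots> = (\<Sum>j<M. card {k\<in>{..<s}. j < Y k})"
    by (intro sum.cong refl) (simp add: sum.inter_filter[symmetric])
  finally show ?thesis .
qed

lemma sum_last_le_sum_subset:
  fixes y :: "nat \<Rightarrow> nat"
  assumes antimono: "\<And>i j. i \<le> j \<Longrightarrow> j < s \<Longrightarrow> y j \<le> y i" and "A \<subseteq> {..<s}"
  shows "(\<Sum>i\<in>{s - card A..<s}. y i) \<le> sum y A"
  using assms
proof (induction s arbitrary: A)
  case 0
  then show ?case by simp
next
  case (Suc s)
  have antimono_s: "\<And>i j. i \<le> j \<Longrightarrow> j < s \<Longrightarrow> y j \<le> y i" using Suc.prems(1) by simp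
  have "finite A" using Suc.prems(2) finite_subset by blast
  show ?case
  proof (cases "s \<in> A")
    case True
    have A': "A - {s} \<subseteq> {..<s}" using Suc.prems(2) by (auto simp: less_Suc_eq)
    then have "card (A - {s}) \<le> s" using card_mono[of "{..<s}"] by fastforce
    moreover have "card A = Suc (card (A - {s}))" using True \<open>finite A\<close> card_Suc_Diff1 by fastforce
    ultimately have "{Suc s - card A..<Suc s} = insert s {s - card (A - {s})..<s}" by auto
    then have "(\<Sum>i\<in>{Suc s - card A..<Suc s}. y i) = y s + (\<Sum>i\<in>{s - card (A - {s})..<s}. y i)"
      by simp
    also have "\<dots> \<le> y s + sum y (A - {s})" using Suc.IH[OF antimono_s A'] by simp
    also have "\<dots> = sum y A" using True \<open>finite A\<close> by (simp add: sum.remove)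
    finally show ?thesis .
  next
    case False
    then have A: "A \<subseteq> {..<s}" using Suc.prems(2) by (auto simp: less_Suc_eq)
    then have "card A \<le> s" using card_mono[of "{..<s}"] by fastforce
    then have "(\<Sum>i\<in>{Suc s - card A..<Suc s}. y i) = (\<Sum>i\<in>{Suc (s - card A)..<Suc s}. y i)"
      by (simp add: Suc_diff_le)
    also have "\<dots> = (\<Sum>i\<in>{s - card A..<s}. y (Suc i))"
      by (rule sum.shift_bounds_Suc_ivl)
    also have "\<dots> \<le> (\<Sum>i\<in>{s - card A..<s}. y i)"
      using Suc.prems(1) by (intro sum_mono) auto
    also have "\<dots> \<le> sum y A" using Suc.IH[OF antimono_s A] .
    finally show ?thesis .
  qed
qed

lemma card_tail_sums_gt_le:
  fixes y :: "nat \<Rightarrow> nat"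
  assumes antimono: "\<And>i j. i \<le> j \<Longrightarrow> j < s \<Longrightarrow> y j \<le> y i"
    and "A \<subseteq> {..<s}" and "sum y A \<le> t"
  shows "card {k\<in>{..<s}. t < (\<Sum>i\<in>{k..<s}. y i)} \<le> s - card A"
proof -
  have "(\<Sum>i\<in>{k..<s}. y i) \<le> t" if "s - card A \<le> k" for k
  proof -
    have "(\<Sum>i\<in>{k..<s}. y i) \<le> (\<Sum>i\<in>{s - card A..<s}. y i)"
      using that by (intro sum_mono2) auto
    also have "\<dots> \<le> sum y A" using sum_last_le_sum_subset[OF antimono \<open>A \<subseteq> {..<s}\<close>] .
    finally show ?thesis using assms(3) by simp
  qed
  then have "{k\<in>{..<s}. t < (\<Sum>i\<in>{k..<s}. y i)} \<subseteq> {..<s - card A}"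
    by (auto simp: not_le[symmetric])
  then show ?thesis by (metis card_lessThan card_mono finite_lessThan)
qed

definition independent :: "('a \<Rightarrow> 'a \<Rightarrow> bool) \<Rightarrow> 'a set \<Rightarrow> bool" where
  "independent E I \<longleftrightarrow> (\<forall>x\<in>I. \<forall>y\<in>I. \<not> E x y)"

lemma ex_max_independent_subset:
  assumes "finite V"
  obtains I where "I \<subseteq> V" "independent E I"
    "\<And>J. J \<subseteq> V \<Longrightarrow> independent E J \<Longrightarrow> card J \<le> card I"
proof -
  have "\<exists>I. (I \<subseteq> V \<and> independent E I) \<and>
      (\<forall>J. J \<subseteq> V \<and> independent E J \<longrightarrow> card J \<le> card I)"
    by (rule Lattices_Big.ex_has_greatest_nat[where k = "{}" and b = "Suc (card V)"])
      (auto simp: independent_def assms card_mono le_imp_less_Suc)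
  then show thesis using that by blast
qed

lemma ex_coloring_independent_card_le_class:
  assumes "finite V" and "\<And>x. \<not> E x x"
  shows "\<exists>c. proper_coloring V E c \<and>
    (\<forall>j I. I \<subseteq> {v\<in>V. j \<le> c v} \<longrightarrow> independent E I \<longrightarrow> card I \<le> card {v\<in>V. c v = j})"
  using assms(1)
proof (induction V rule: finite_psubset_induct)
  case (psubset V)
  show ?case
  proof (cases "V = {}")
    case True
    then show ?thesis by (auto simp: proper_coloring_def)
  next
    case False
    obtain I0 where I0: "I0 \<subseteq> V" "independent E I0"
      and I0_max: "\<And>J. J \<subseteq> V \<Longrightarrow> independent E J \<Longrightarrow> card J \<le> card I0"
      using ex_max_independent_subset[of V E] psubset.hyps by blast
    obtain v where "v \<in> V" using False by auto
    then have "1 \<le> card I0"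
      using I0_max[of "{v}"] assms(2) by (auto simp: independent_def)
    then have "I0 \<noteq> {}" by auto
    then have "V - I0 \<subset> V" using I0(1) by blast
    then obtain c' where c'_proper: "proper_coloring (V - I0) E c'"
      and c'_classes: "\<And>j I. I \<subseteq> {v\<in>V - I0. j \<le> c' v} \<Longrightarrow> independent E I \<Longrightarrow>
        card I \<le> card {v\<in>V - I0. c' v = j}"
      using psubset.IH by blast
    define c where "c v = (if v \<in> I0 then 0 else Suc (c' v))" for v
    have "proper_coloring V E c"
      using c'_proper I0(2) by (auto simp: c_def proper_coloring_def independent_def)
    moreover have "card I \<le> card {v\<in>V. c v = j}"
      if "I \<subseteq> {v\<in>V. j \<le> c v}" "independent E I" for j I
    proof (cases j)
      case 0
      then have "{v\<in>V. c v = j} = I0" using I0(1) by (auto simp: c_def)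
      then show ?thesis using I0_max that by auto
    next
      case (Suc j')
      then have "I \<subseteq> {v\<in>V - I0. j' \<le> c' v}" using that(1) by (auto simp: c_def split: if_splits)
      moreover have "{v\<in>V - I0. c' v = j'} = {v\<in>V. c v = j}" using Suc by (auto simp: c_def)
      ultimately show ?thesis using c'_classes that(2) by metis
    qed
    ultimately show ?thesis by blast
  qed
qed

lemma sum_card_color_classes:
  assumes "finite V"
  shows "(\<Sum>j<M. card {v\<in>V. c v = j}) = card {v\<in>V. c v < (M::nat)}"
proof -
  have "card (\<Union>j<M. {v\<in>V. c v = j}) = (\<Sum>j<M. card {v\<in>V. c v = j})"
    using assms by (intro card_UN_disjoint) auto
  moreover have "(\<Union>j<M. {v\<in>V. c v = j}) = {v\<in>V. c v < M}" by auto
  ultimately show ?thesis by simp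
qed

lemma card_cliques_reaching_color_le_class:
  assumes f_inj: "inj_on f (cliques_V s y)" and f_V: "f ` cliques_V s y \<subseteq> V"
    and f_nonadjacent: "\<And>u v. u \<in> cliques_V s y \<Longrightarrow> v \<in> cliques_V s y \<Longrightarrow>
      E (f u) (f v) \<Longrightarrow> cliques_E s y u v"
    and class_j: "\<And>I. I \<subseteq> {v\<in>V. j \<le> c v} \<Longrightarrow> independent E I \<Longrightarrow>
      card I \<le> card {v\<in>V. c v = j}"
  shows "card {i\<in>{..<s}. \<exists>x<y i. j \<le> c (f (i, x))} \<le> card {v\<in>V. c v = j}"
proof -
  define high where "high = {i\<in>{..<s}. \<exists>x<y i. j \<le> c (f (i, x))}"
  have "\<forall>i\<in>high. \<exists>x. x < y i \<and> j \<le> c (f (i, x))" by (auto simp: high_def)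
  then obtain p where p: "\<And>i. i \<in> high \<Longrightarrow> p i < y i \<and> j \<le> c (f (i, p i))"
    by (metis bchoice)
  have p_V: "(i, p i) \<in> cliques_V s y" if "i \<in> high" for i
    using p[OF that] that by (auto simp: high_def cliques_V_def)
  define I where "I = (\<lambda>i. f (i, p i)) ` high"
  have "inj_on (\<lambda>i. f (i, p i)) high"
    using f_inj p_V by (auto simp: inj_on_def)
  then have "card high = card I" by (simp add: I_def card_image)
  also have "\<dots> \<le> card {v\<in>V. c v = j}"
  proof (rule class_j)
    show "I \<subseteq> {v\<in>V. j \<le> c v}" using p p_V f_V by (auto simp: I_def)
    show "independent E I"
      unfolding independent_def
    proof (intro ballI)
      fix a b assume "a \<in> I" "b \<in> I"
      then obtain i i' where "i \<in> high" "i' \<in> high" "a = f (i, p i)" "b = f (i', p i')"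
        by (auto simp: I_def)
      moreover have "\<not> cliques_E s y (i, p i) (i', p i')" by (simp add: cliques_E_def)
      ultimately show "\<not> E a b" using f_nonadjacent p_V by blast
    qed
  qed
  finally show ?thesis by (simp add: high_def)
qed

lemma card_tail_sums_gt_le_color_class:
  fixes y :: "nat \<Rightarrow> nat"
  assumes antimono: "\<And>i j. i \<le> j \<Longrightarrow> j < s \<Longrightarrow> y j \<le> y i"
    and copy: "has_rainbow_induced_copy (cliques_V s y) (cliques_E s y) V E c"
    and class_j: "\<And>I. I \<subseteq> {v\<in>V. j \<le> c v} \<Longrightarrow> independent E I \<Longrightarrow>
      card I \<le> card {v\<in>V. c v = j}"
  shows "card {k\<in>{..<s}. j < (\<Sum>i\<in>{k..<s}. y i)} \<le> card {v\<in>V. c v = j}"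
proof -
  obtain f where f_inj: "inj_on f (cliques_V s y)" and f_V: "f ` cliques_V s y \<subseteq> V"
    and f_edges: "\<forall>u\<in>cliques_V s y. \<forall>v\<in>cliques_V s y. cliques_E s y u v \<longleftrightarrow> E (f u) (f v)"
    and rainbow: "inj_on (c \<circ> f) (cliques_V s y)"
    using copy unfolding has_rainbow_induced_copy_def by blast
  define high where "high = {i\<in>{..<s}. \<exists>x<y i. j \<le> c (f (i, x))}"
  define low where "low = {..<s} - high"
  have low_V: "Sigma low (\<lambda>i. {..<y i}) \<subseteq> cliques_V s y"
    by (auto simp: low_def cliques_V_def)
  have "sum y low = card (Sigma low (\<lambda>i. {..<y i}))"
    by (simp add: low_def card_SigmaI)
  also have "\<dots> = card ((c \<circ> f) ` Sigma low (\<lambda>i. {..<y i}))"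
    using inj_on_subset[OF rainbow low_V] by (rule card_image[symmetric])
  also have "\<dots> \<le> card {..<j}"
    by (intro card_mono) (auto simp: low_def high_def not_le)
  finally have "sum y low \<le> j" by simp
  then have "card {k\<in>{..<s}. j < (\<Sum>i\<in>{k..<s}. y i)} \<le> s - card low"
    using card_tail_sums_gt_le[OF antimono] by (simp add: low_def)
  also have "s - card low = card high"
  proof -
    have "high \<subseteq> {..<s}" by (auto simp: high_def)
    then show ?thesis
      using card_mono[of "{..<s}" high] by (simp add: low_def card_Diff_subset finite_subset)
  qed
  also have "\<dots> \<le> card {v\<in>V. c v = j}"
    unfolding high_def
    by (rule card_cliques_reaching_color_le_class[where E = E, OF f_inj f_V])
      (use f_edges class_j in blast)+
  finally show ?thesis .
qed

lemma rho_witness_size_cliques_ge: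
  fixes y :: "nat \<Rightarrow> nat"
  assumes antimono: "\<And>i j. i \<le> j \<Longrightarrow> j < s \<Longrightarrow> y j \<le> y i"
    and "rho_witness_size (cliques_V s y) (cliques_E s y) m"
  shows "(\<Sum>i<s. (i + 1) * y i) \<le> m"
proof -
  let ?V = "{0..<m}"
  obtain E :: "nat \<Rightarrow> nat \<Rightarrow> bool" where "simple_graph ?V E"
    and copies: "\<And>c. proper_coloring ?V E c \<Longrightarrow>
      has_rainbow_induced_copy (cliques_V s y) (cliques_E s y) ?V E c"
    using assms(2) unfolding rho_witness_size_def by blast
  then have "\<And>x. \<not> E x x" by (auto simp: simple_graph_def)
  then obtain c where proper: "proper_coloring ?V E c"
    and classes: "\<And>j I. I \<subseteq> {v\<in>?V. j \<le> c v} \<Longrightarrow> independent E I \<Longrightarrow>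
      card I \<le> card {v\<in>?V. c v = j}"
    using ex_coloring_independent_card_le_class[of ?V E] by auto
  have copy: "has_rainbow_induced_copy (cliques_V s y) (cliques_E s y) ?V E c"
    using copies[OF proper] .
  define M where "M = (\<Sum>i<s. y i)"
  have "(\<Sum>i<s. (i + 1) * y i) = (\<Sum>k<s. \<Sum>i\<in>{k..<s}. y i)"
    by (rule sum_tail_sums[symmetric])
  also have "\<dots> = (\<Sum>j<M. card {k\<in>{..<s}. j < (\<Sum>i\<in>{k..<s}. y i)})"
    by (rule sum_eq_sum_card_levels) (auto simp: M_def intro: sum_mono2)
  also have "\<dots> \<le> (\<Sum>j<M. card {v\<in>?V. c v = j})"
    by (intro sum_mono card_tail_sums_gt_le_color_class[OF antimono copy classes])
  also have "\<dots> = card {v\<in>?V. c v < M}"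
    by (rule sum_card_color_classes) simp
  also have "\<dots> \<le> card ?V" by (intro card_mono) auto
  also have "\<dots> = m" by simp
  finally show ?thesis .
qed

lemma ex_rainbow_injection_avoiding:
  assumes "finite B" "inj_on c B" "finite C" "card C + n \<le> card B"
  obtains g where "g ` {..<n} \<subseteq> B" "inj_on (c \<circ> g) {..<n}" "(c \<circ> g) ` {..<n} \<inter> C = {}"
proof -
  define B' where "B' = {u\<in>B. c u \<notin> C}"
  have "card {u\<in>B. c u \<in> C} \<le> card C"
    using assms(2,3) by (intro card_inj_on_le[where f = c]) (auto intro: inj_on_subset)
  moreover have "card B = card B' + card {u\<in>B. c u \<in> C}"
    unfolding B'_def using assms(1) by (subst card_Un_disjoint[symmetric]) (auto intro: arg_cong[where f = card])
  ultimately have "card {..<n} \<le> card B'" using assms(4) by simp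
  then obtain g where g: "g ` {..<n} \<subseteq> B'" "inj_on g {..<n}"
    using card_le_inj[of "{..<n}" B'] assms(1) by (auto simp: B'_def)
  have "inj_on c (g ` {..<n})" using g(1) assms(2) by (auto simp: B'_def intro: inj_on_subset)
  then have "inj_on (c \<circ> g) {..<n}" using g(2) by (simp add: comp_inj_on)
  moreover have "g ` {..<n} \<subseteq> B" "(c \<circ> g) ` {..<n} \<inter> C = {}" using g(1) by (auto simp: B'_def)
  ultimately show thesis using that by blast
qed

lemma ex_rainbow_choice:
  fixes y :: "nat \<Rightarrow> nat"
  assumes "\<And>i. i < s \<Longrightarrow> finite (B i)" "\<And>i. i < s \<Longrightarrow> inj_on c (B i)"
    and "\<And>i. i < s \<Longrightarrow> (\<Sum>l\<in>{i..<s}. y l) \<le> card (B i)"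
    and "k \<le> s"
  shows "\<exists>f. (\<forall>p\<in>Sigma {k..<s} (\<lambda>i. {..<y i}). f p \<in> B (fst p)) \<and>
    inj_on (c \<circ> f) (Sigma {k..<s} (\<lambda>i. {..<y i}))"
  using assms(4)
proof (induction k rule: inc_induct)
  case base
  then show ?case by simp
next
  case (step k)
  let ?D = "\<lambda>k. Sigma {k..<s} (\<lambda>i. {..<y i})"
  obtain f where f_B: "\<forall>p\<in>?D (Suc k). f p \<in> B (fst p)" and f_inj: "inj_on (c \<circ> f) (?D (Suc k))"
    using step.IH by blast
  define C where "C = (c \<circ> f) ` ?D (Suc k)"
  have "card C = (\<Sum>l\<in>{Suc k..<s}. y l)"
    unfolding C_def card_image[OF f_inj] by (simp add: card_SigmaI)
  then have "card C + y k \<le> card (B k)"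
    using assms(3)[of k] step.hyps by (simp add: sum.atLeast_Suc_lessThan)
  then obtain g where g_B: "g ` {..<y k} \<subseteq> B k" and g_inj: "inj_on (c \<circ> g) {..<y k}"
    and g_new: "(c \<circ> g) ` {..<y k} \<inter> C = {}"
    using ex_rainbow_injection_avoiding[of "B k" c C "y k"] assms(1,2) step.hyps
    by (auto simp: C_def)
  define f' where "f' p = (if fst p = k then g (snd p) else f p)" for p
  have D_k: "?D k = {k} \<times> {..<y k} \<union> ?D (Suc k)"
    using step.hyps by (auto simp: Suc_le_eq order.order_iff_strict)
  have "inj_on (c \<circ> f') ({k} \<times> {..<y k})"
    using g_inj by (auto simp: inj_on_def f'_def)
  moreover have "inj_on (c \<circ> f') (?D (Suc k))"
    using f_inj by (auto simp: inj_on_def f'_def)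
  moreover have "(c \<circ> f') ` ({k} \<times> {..<y k}) \<inter> (c \<circ> f') ` ?D (Suc k) = {}"
    using g_new by (auto simp: f'_def C_def)
  ultimately have "inj_on (c \<circ> f') (?D k)"
    unfolding D_k by (auto simp: inj_on_Un)
  moreover have "\<forall>p\<in>?D k. f' p \<in> B (fst p)"
    using f_B g_B unfolding D_k by (auto simp: f'_def)
  ultimately show ?case by blast
qed

lemma ex_labelling_with_class_sizes:
  fixes Y :: "nat \<Rightarrow> nat"
  obtains lab :: "nat \<Rightarrow> nat"
  where "\<And>k. k < s \<Longrightarrow> card {u\<in>{0..<(\<Sum>k<s. Y k)}. lab u = k} = Y k"
proof -
  define W where "W = Sigma {..<s} (\<lambda>k. {..<Y k})"
  have "finite W" by (simp add: W_def)
  then obtain h where "bij_betw h {0..<card W} W"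
    using ex_bij_betw_nat_finite by blast
  moreover have "card W = (\<Sum>k<s. Y k)" by (simp add: W_def card_SigmaI)
  ultimately have h: "bij_betw h {0..<(\<Sum>k<s. Y k)} W" by simp
  have "card {u\<in>{0..<(\<Sum>k<s. Y k)}. fst (h u) = k} = Y k" (is "card ?B = _") if "k < s" for k
  proof -
    have "inj_on h ?B"
      by (rule inj_on_subset[OF bij_betw_imp_inj_on[OF h]]) auto
    then have "card ?B = card (h ` ?B)" by (simp add: card_image)
    also have "h ` ?B = {z\<in>W. fst z = k}"
      using bij_betw_imp_surj_on[OF h] by auto
    also have "\<dots> = {k} \<times> {..<Y k}" using that by (auto simp: W_def)
    finally show ?thesis by (simp add: card_cartesian_product_singleton)
  qed
  then show thesis using that[of "fst \<circ> h"] by simp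
qed

lemma rho_witness_size_cliques:
  fixes y :: "nat \<Rightarrow> nat"
  shows "rho_witness_size (cliques_V s y) (cliques_E s y) (\<Sum>i<s. (i + 1) * y i)"
proof -
  define N where "N = (\<Sum>k<s. \<Sum>i\<in>{k..<s}. y i)"
  obtain lab where lab: "\<And>k. k < s \<Longrightarrow> card {u\<in>{0..<N}. lab u = k} = (\<Sum>i\<in>{k..<s}. y i)"
    using ex_labelling_with_class_sizes[of s "\<lambda>k. \<Sum>i\<in>{k..<s}. y i"] unfolding N_def by blast
  define E where "E u v \<longleftrightarrow> u < N \<and> v < N \<and> u \<noteq> v \<and> lab u = lab v" for u v
  define B where "B k = {u\<in>{0..<N}. lab u = k}" for k
  have "simple_graph {0..<N} E" by (auto simp: simple_graph_def E_def)
  moreover have "has_rainbow_induced_copy (cliques_V s y) (cliques_E s y) {0..<N} E c"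
    if proper: "proper_coloring {0..<N} E c" for c
  proof -
    have "inj_on c (B k)" for k
    proof (rule inj_onI)
      fix u v assume "u \<in> B k" "v \<in> B k" "c u = c v"
      then show "u = v" using proper unfolding proper_coloring_def B_def E_def by fastforce
    qed
    then obtain f where f_B: "\<forall>p\<in>Sigma {0..<s} (\<lambda>i. {..<y i}). f p \<in> B (fst p)"
      and f_rainbow: "inj_on (c \<circ> f) (Sigma {0..<s} (\<lambda>i. {..<y i}))"
      using ex_rainbow_choice[of s B c y 0] lab by (auto simp: B_def)
    have V: "cliques_V s y = Sigma {0..<s} (\<lambda>i. {..<y i})"
      by (auto simp: cliques_V_def)
    have f_inj: "inj_on f (cliques_V s y)"
      using inj_on_imageI2[OF f_rainbow] V by simp
    have f_label: "f u < N \<and> lab (f u) = fst u" if "u \<in> cliques_V s y" for u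
      using f_B V that by (auto simp: B_def)
    show ?thesis
      unfolding has_rainbow_induced_copy_def
    proof (intro exI conjI ballI)
      show "inj_on f (cliques_V s y)" by (rule f_inj)
      show "inj_on (c \<circ> f) (cliques_V s y)" using f_rainbow V by simp
      show "f ` cliques_V s y \<subseteq> {0..<N}" using f_label by auto
      fix u v assume u: "u \<in> cliques_V s y" and v: "v \<in> cliques_V s y"
      then have "f u = f v \<longleftrightarrow> u = v" using f_inj by (auto simp: inj_on_def)
      then show "cliques_E s y u v \<longleftrightarrow> E (f u) (f v)"
        using f_label[OF u] f_label[OF v] u v by (auto simp: cliques_E_def E_def)
    qed
  qed
  ultimately show ?thesis
    unfolding rho_witness_size_def N_def sum_tail_sums by blast
qed

theorem corollary3p2:
  fixes s :: nat and y :: "nat \<Rightarrow> nat"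
  assumes "s \<ge> 1"
    and "\<And>i j. i \<le> j \<Longrightarrow> j < s \<Longrightarrow> y j \<le> y i"
    and "\<And>i. i < s \<Longrightarrow> y i \<ge> 1"
  shows "rho (cliques_V s y) (cliques_E s y) = (\<Sum>i<s. (i + 1) * y i)"
  unfolding rho_def
proof (rule Least_equality)
  show "rho_witness_size (cliques_V s y) (cliques_E s y) (\<Sum>i<s. (i + 1) * y i)"
    by (rule rho_witness_size_cliques)
  show "\<And>m. rho_witness_size (cliques_V s y) (cliques_E s y) m \<Longrightarrow> (\<Sum>i<s. (i + 1) * y i) \<le> m"
    using rho_witness_size_cliques_ge[OF assms(2)] .
qed

end
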